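(* Let $n$ and $N$ be positive integers. Let $\mathcal{C}(N)$ be the set of partitions $\pi$ into distinct parts satisfying $\ell(\pi) \ge N > \ell(\pi) - s(\pi)$. Then \[ \sum_{\pi \in \mathcal{D}(n)\cap \mathcal{C}(N)} (-1)^{\#(\pi)-1} = \begin{cases} 1, & \text{if } N \mid n,\\ 0, & \text{if } N \nmid n.\end{cases} \]
   Context: $\mathcal{D}(n)$ denotes the set of all partitions of $n$ into distinct parts. For a partition $\pi$: $s(\pi)$ is its smallest part, $\ell(\pi)$ its largest part, and $\#(\pi)$ its number of parts. *)

theory Defs
  imports Main
begin

text \<open>A partition into distinct parts is represented by its (finite) set of parts,
  all positive. \<open>distinct_partitions n\<close> is the set D(n).\<close>

definition distinct_partitions :: "nat \<Rightarrow> nat set set" where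
  "distinct_partitions n = {P. finite P \<and> 0 \<notin> P \<and> \<Sum>P = n}"

definition smallest_part :: "nat set \<Rightarrow> nat" where
  "smallest_part P = Min P"

definition largest_part :: "nat set \<Rightarrow> nat" where
  "largest_part P = Max P"

definition num_parts :: "nat set \<Rightarrow> nat" where
  "num_parts P = card P"

text \<open>C(N): distinct-part partitions with l(pi) >= N > l(pi) - s(pi).
  (Nonemptiness is required so that s and l are defined.)\<close>
definition C_set :: "nat \<Rightarrow> nat set set" where
  "C_set N = {P. finite P \<and> 0 \<notin> P \<and> P \<noteq> {} \<and>
      largest_part P \<ge> N \<and> int N > int (largest_part P) - int (smallest_part P)}"

end

theory Submission imports Defs "HOL-Computational_Algebra.Polynomial" begin

text \<open>A partition in C(N) with largest part l is l together with a set of distinct parts from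
  the window [l-N+1, l-1], so its signed generating function is the sum over l \<ge> N of
  q^l times the product of 1 - q^j over the window. Moving the window from l to l+1 trades the
  factor 1 - q^l for 1 - q^(l+1-N); hence multiplying the series by 1 - q^N telescopes it to q^N,
  i.e. the series is q^N/(1 - q^N). The argument runs on the polynomial truncations l < N+k.\<close>

lemma prod_neg_monom:
  "finite B \<Longrightarrow> (\<Prod>x\<in>B. - monom (1::int) x) = monom ((-1) ^ card B) (\<Sum>B)"
  by (induction B rule: finite_induct) (auto simp: mult_monom minus_monom)

lemma coeff_prod_one_minus_monom:
  assumes "finite A"
  shows "coeff (\<Prod>j\<in>A. 1 - monom (1::int) j) m = (\<Sum>B\<in>{B\<in>Pow A. \<Sum>B = m}. (-1) ^ card B)"
proof -
  have "(\<Prod>j\<in>A. 1 - monom (1::int) j) = (\<Prod>j\<in>A. - monom 1 j + 1)"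
    by simp
  also have "\<dots> = (\<Sum>B\<in>Pow A. monom ((-1) ^ card B) (\<Sum>B))"
    using assms by (subst prod_add) (auto intro!: sum.cong simp: prod_neg_monom finite_subset)
  finally have "coeff (\<Prod>j\<in>A. 1 - monom (1::int) j) m
      = (\<Sum>B\<in>Pow A. if \<Sum>B = m then (-1) ^ card B else 0)"
    by (auto simp: coeff_sum intro!: sum.cong)
  also have "\<dots> = (\<Sum>B\<in>{B\<in>Pow A. \<Sum>B = m}. (-1) ^ card B)"
    using assms by (subst sum.inter_filter) auto
  finally show ?thesis .
qed

definition window_poly :: "nat \<Rightarrow> nat \<Rightarrow> int poly" where
  "window_poly N l = (\<Prod>j\<in>{l+1-N..<l}. 1 - monom 1 j)"

definition C_set_gf_trunc :: "nat \<Rightarrow> nat \<Rightarrow> int poly" where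
  "C_set_gf_trunc N k = (\<Sum>l\<in>{N..<N+k}. monom 1 l * window_poly N l)"

lemma window_poly_Suc:
  assumes "N > 0" "N \<le> l + 1"
  shows "window_poly N (l+1) * (1 - monom 1 (l+1-N)) = window_poly N l * (1 - monom 1 l)"
proof -
  have low: "{l+1-N..<l+1} = insert (l+1-N) {l+1+1-N..<l+1}"
    and high: "{l+1-N..<l+1} = insert l {l+1-N..<l}"
    using assms by auto
  have "window_poly N (l+1) * (1 - monom 1 (l+1-N)) = (\<Prod>j\<in>{l+1-N..<l+1}. 1 - monom 1 j)"
    using assms unfolding window_poly_def low by (simp add: mult.commute)
  also have "\<dots> = window_poly N l * (1 - monom 1 l)"
    unfolding window_poly_def high by (simp add: mult.commute)
  finally show ?thesis .
qed

lemma monom_one_eq_power: "monom (1::int) n = [:0, 1:] ^ n"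
  by (simp add: monom_altdef)

lemma C_set_gf_trunc_telescope:
  assumes "N > 0"
  shows "(1 - monom 1 N) * C_set_gf_trunc N k
         = window_poly N (N+k) * (monom 1 N - monom 1 (N+k))"
proof (induction k)
  case 0
  show ?case by (simp add: C_set_gf_trunc_def)
next
  case (Suc k)
  have step: "window_poly N (N+k+1) * (1 - monom 1 (k+1))
      = window_poly N (N+k) * (1 - monom 1 (N+k))"
    using window_poly_Suc[OF assms, of "N+k"] assms by simp
  have "(1 - monom 1 N) * C_set_gf_trunc N (Suc k)
      = (1 - monom 1 N) * (monom 1 (N+k) * window_poly N (N+k))
        + window_poly N (N+k) * (monom 1 N - monom 1 (N+k))"
    using Suc.IH by (simp add: C_set_gf_trunc_def distrib_left)
  also have "\<dots> = monom 1 N * (window_poly N (N+k) * (1 - monom 1 (N+k)))"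
    by (simp add: monom_one_eq_power algebra_simps power_add)
  also have "\<dots> = window_poly N (N + Suc k) * (monom 1 N - monom 1 (N + Suc k))"
    by (simp only: step[symmetric]) (simp add: monom_one_eq_power algebra_simps power_add)
  finally show ?case .
qed

lemma coeff_window_poly_low:
  assumes "m < l + 1 - N"
  shows "coeff (window_poly N l) m = (if m = 0 then 1 else 0)"
proof -
  have empty: "B = {}" if "B \<subseteq> {l+1-N..<l}" "\<Sum>B < l + 1 - N" for B
  proof (rule ccontr)
    assume "B \<noteq> {}"
    then obtain b where "b \<in> B" by auto
    moreover have "finite B" using that(1) finite_subset by blast
    ultimately have "b \<le> \<Sum>B" using member_le_sum[of b B id] by simp
    with \<open>b \<in> B\<close> that show False by auto
  qed
  have "{B\<in>Pow {l+1-N..<l}. \<Sum>B = m} = (if m = 0 then {{}} else {})"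
  proof (intro equalityI subsetI)
    fix B assume B: "B \<in> {B\<in>Pow {l+1-N..<l}. \<Sum>B = m}"
    then have "B = {}" using assms by (intro empty) auto
    with B show "B \<in> (if m = 0 then {{}} else {})" by auto
  qed (auto split: if_splits)
  then show ?thesis
    unfolding window_poly_def by (simp add: coeff_prod_one_minus_monom)
qed

lemma coeff_C_set_gf_trunc_rec:
  assumes "N > 0" "m < N + k"
  shows "coeff (C_set_gf_trunc N k) m
         = (if N \<le> m then coeff (C_set_gf_trunc N k) (m - N) else 0) + (if m = N then 1 else 0)"
proof -
  let ?S = "C_set_gf_trunc N k" and ?W = "window_poly N (N+k)"
  have "coeff ((1 - monom 1 N) * ?S) m
      = coeff ?S m - (if N \<le> m then coeff ?S (m - N) else 0)"
    by (simp add: left_diff_distrib coeff_monom_mult)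
  moreover have "coeff (?W * (monom 1 N - monom 1 (N+k))) m
      = (if N \<le> m then coeff ?W (m - N) else 0)"
    using assms(2) by (simp add: right_diff_distrib mult.commute coeff_monom_mult)
  moreover have "N \<le> m \<Longrightarrow> coeff ?W (m - N) = (if m = N then 1 else 0)"
    using assms by (subst coeff_window_poly_low) auto
  ultimately show ?thesis
    using C_set_gf_trunc_telescope[OF assms(1), of k] by (cases "N \<le> m") auto
qed

lemma coeff_C_set_gf_trunc:
  assumes "N > 0" "m < N + k"
  shows "coeff (C_set_gf_trunc N k) m = (if N dvd m \<and> m > 0 then 1 else 0)"
  using assms(2)
proof (induction m rule: less_induct)
  case (less m)
  have rec: "coeff (C_set_gf_trunc N k) m
      = (if N \<le> m then coeff (C_set_gf_trunc N k) (m - N) else 0) + (if m = N then 1 else 0)"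
    using coeff_C_set_gf_trunc_rec[OF assms(1) less.prems] .
  show ?case
  proof (cases "N < m")
    case True
    then have "coeff (C_set_gf_trunc N k) (m - N) = (if N dvd (m - N) \<and> m - N > 0 then 1 else 0)"
      using less assms(1) by simp
    with True rec show ?thesis by (simp add: dvd_minus_self)
  next
    case False
    show ?thesis
    proof (cases "m = N")
      case True
      then have "coeff (C_set_gf_trunc N k) 0 = 0"
        using less.IH[of 0] less.prems assms(1) by simp
      with True rec assms(1) show ?thesis by simp
    next
      case False
      with \<open>\<not> N < m\<close> rec show ?thesis by (auto dest: dvd_imp_le)
    qed
  qed
qed

lemma C_set_signed_count_eq_coeff:
  assumes "N > 0" "n < N + k"
  shows "(\<Sum>P \<in> distinct_partitions n \<inter> C_set N. (-1::int) ^ (num_parts P - 1))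
         = coeff (C_set_gf_trunc N k) n"
proof -
  define Sg where "Sg = (SIGMA l:{N..n}. {B\<in>Pow {l+1-N..<l}. \<Sum>B = n - l})"
  have "coeff (C_set_gf_trunc N k) n = (\<Sum>l\<in>{N..<N+k}. if n < l then 0 else coeff (window_poly N l) (n - l))"
    by (auto simp: C_set_gf_trunc_def coeff_sum coeff_monom_mult intro!: sum.cong)
  also have "\<dots> = (\<Sum>l\<in>{N..n}. coeff (window_poly N l) (n - l))"
    using assms(2) by (intro sum.mono_neutral_cong_right) auto
  also have "\<dots> = (\<Sum>l\<in>{N..n}. \<Sum>B\<in>{B\<in>Pow {l+1-N..<l}. \<Sum>B = n - l}. (-1) ^ card B)"
    unfolding window_poly_def by (simp add: coeff_prod_one_minus_monom)
  also have "\<dots> = (\<Sum>(l,B)\<in>Sg. (-1::int) ^ card B)"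
    unfolding Sg_def by (rule sum.Sigma) auto
  also have "\<dots> = (\<Sum>P \<in> distinct_partitions n \<inter> C_set N. (-1::int) ^ (num_parts P - 1))"
  proof (rule sum.reindex_bij_witness[where i="\<lambda>P. (Max P, P - {Max P})" and j="\<lambda>(l,B). insert l B"])
    fix a assume "a \<in> Sg"
    then obtain l B where a: "a = (l,B)" and l: "N \<le> l" "l \<le> n"
      and B: "B \<subseteq> {l+1-N..<l}" "\<Sum>B = n - l"
      unfolding Sg_def by auto
    have fin: "finite B" using B(1) finite_subset by blast
    have "l \<notin> B" using B(1) by auto
    have max: "Max (insert l B) = l" using fin B(1) by (intro Max_eqI) auto
    have min_ge: "l + 1 - N \<le> Min (insert l B)" using fin B(1) assms(1) by (subst Min_ge_iff) auto
    show "(\<lambda>P. (Max P, P - {Max P})) ((\<lambda>(l,B). insert l B) a) = a"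
      using a max \<open>l \<notin> B\<close> by auto
    have "0 \<notin> insert l B" "\<Sum>(insert l B) = n"
      using l B fin \<open>l \<notin> B\<close> assms(1) by auto
    moreover have "int N > int l - int (Min (insert l B))"
      using min_ge l by linarith
    ultimately show "(\<lambda>(l,B). insert l B) a \<in> distinct_partitions n \<inter> C_set N"
      using a fin max l unfolding distinct_partitions_def C_set_def largest_part_def smallest_part_def
      by auto
    show "(-1::int) ^ (num_parts ((\<lambda>(l,B). insert l B) a) - 1) = (case a of (l,B) \<Rightarrow> (-1) ^ card B)"
      using a fin \<open>l \<notin> B\<close> unfolding num_parts_def by simp
  next
    fix P assume "P \<in> distinct_partitions n \<inter> C_set N"
    then have fin: "finite P" and "P \<noteq> {}" and sum: "\<Sum>P = n"
      and ge: "Max P \<ge> N" and window: "int N > int (Max P) - int (Min P)"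
      unfolding distinct_partitions_def C_set_def largest_part_def smallest_part_def by auto
    then have max: "Max P \<in> P" by simp
    show "(\<lambda>(l,B). insert l B) ((\<lambda>P. (Max P, P - {Max P})) P) = P"
      using max by auto
    have "Max P \<le> n" using member_le_sum[of "Max P" P id] max fin sum by simp
    moreover have "P - {Max P} \<subseteq> {Max P + 1 - N..<Max P}"
    proof
      fix x assume x: "x \<in> P - {Max P}"
      then have "x \<le> Max P" "Min P \<le> x" using fin by auto
      with x window show "x \<in> {Max P + 1 - N..<Max P}" by auto
    qed
    moreover have "\<Sum>(P - {Max P}) = n - Max P" using sum.remove[OF fin max, of id] sum by simp
    ultimately show "(\<lambda>P. (Max P, P - {Max P})) P \<in> Sg"
      unfolding Sg_def using ge by auto
  qed
  finally show ?thesis by simp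
qed

theorem mainTheorem2:
  fixes n N :: nat
  assumes "n > 0" and "N > 0"
  shows "(\<Sum>P \<in> distinct_partitions n \<inter> C_set N. (-1::int) ^ (num_parts P - 1))
         = (if N dvd n then 1 else 0)"
proof -
  have "n < N + n" using assms(2) by simp
  then show ?thesis
    using C_set_signed_count_eq_coeff[OF assms(2)] coeff_C_set_gf_trunc[OF assms(2)] assms(1)
    by presburger
qed

end
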